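(* Let $X,Y$ be Banach spaces, let $-A$ be the generator of a strongly continuous semigroup $(T(t))_{t\ge0}$ on $X$, and let $C:\mathcal D(A)\to Y$ be linear and bounded for the graph norm $\|x\|+\|Ax\|$. Suppose that $(A,C)$ is an admissible and exactly observable BFC-system. Then $\varepsilon(t):=\inf_{\|x\|=1}\|T(t)x\|>0$ for all $t>0$.
   Context: For $\tau\in(0,\infty]$ set $M(\tau)^2:=\sup_{x\in\mathcal D(A),\|x\|=1}\int_0^\tau\|CT(t)x\|_Y^2\,dt$ and $m(\tau)^2:=\inf_{x\in\mathcal D(A),\|x\|=1}\int_0^\tau\|CT(t)x\|_Y^2\,dt$. $C$ is admissible in time $\tau$ if $M(\tau)<\infty$ (this does not depend on $\tau\in(0,\infty)$), and exactly observable in time $\eta$ if $m(\eta)>0$. $(A,C)$ is a BFC-system (backward-forward conditioning) if there exist $0<\eta<\tau$ such that $C$ is admissible and exactly observable in time $\tau$ and $M(\eta)<m(\tau)$ (equivalently $\|\Psi_\tau^{-1}\|\,\|\Psi_\eta\|<1$, where $\Psi_s x=CT(\cdot)x\in L^2(0,s;Y)$, since $\|\Psi_s\|=M(s)$ and $\|\Psi_\tau^{-1}\|=1/m(\tau)$). *)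

theory Defs
  imports "HOL-Analysis.Analysis"
begin

definition c0_semigroup :: "(real \<Rightarrow> 'a::banach \<Rightarrow>\<^sub>L 'a) \<Rightarrow> bool" where
  "c0_semigroup T \<longleftrightarrow>
     T 0 = id_blinfun \<and>
     (\<forall>s\<ge>0. \<forall>t\<ge>0. T (s + t) = T s o\<^sub>L T t) \<and>
     (\<forall>x. ((\<lambda>t. blinfun_apply (T t) x) \<longlongrightarrow> x) (at_right 0))"

text \<open>Domain of the generator of T, and the generator G itself
  (G x = lim_{h -> 0+} (T h x - x)/h). In the paper the generator is -A.\<close>
definition sg_dom :: "(real \<Rightarrow> 'a::banach \<Rightarrow>\<^sub>L 'a) \<Rightarrow> 'a set" where
  "sg_dom T = {x. \<exists>y. ((\<lambda>h. (1 / h) *\<^sub>R (blinfun_apply (T h) x - x)) \<longlongrightarrow> y) (at_right 0)}"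

definition sg_gen :: "(real \<Rightarrow> 'a::banach \<Rightarrow>\<^sub>L 'a) \<Rightarrow> 'a \<Rightarrow> 'a" where
  "sg_gen T x = Lim (at_right 0) (\<lambda>h. (1 / h) *\<^sub>R (blinfun_apply (T h) x - x))"

definition obs_energy :: "(real \<Rightarrow> 'a::banach \<Rightarrow>\<^sub>L 'a) \<Rightarrow> ('a \<Rightarrow> 'b::banach) \<Rightarrow> real \<Rightarrow> 'a \<Rightarrow> real" where
  "obs_energy T C s x = integral {0..s} (\<lambda>t. (norm (C (blinfun_apply (T t) x)))\<^sup>2)"

definition dom_sphere :: "(real \<Rightarrow> 'a::banach \<Rightarrow>\<^sub>L 'a) \<Rightarrow> 'a set" where
  "dom_sphere T = {x \<in> sg_dom T. norm x = 1}"

definition M_obs :: "(real \<Rightarrow> 'a::banach \<Rightarrow>\<^sub>L 'a) \<Rightarrow> ('a \<Rightarrow> 'b::banach) \<Rightarrow> real \<Rightarrow> real" where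
  "M_obs T C s = sqrt (SUP x\<in>dom_sphere T. obs_energy T C s x)"

definition m_obs :: "(real \<Rightarrow> 'a::banach \<Rightarrow>\<^sub>L 'a) \<Rightarrow> ('a \<Rightarrow> 'b::banach) \<Rightarrow> real \<Rightarrow> real" where
  "m_obs T C s = sqrt (INF x\<in>dom_sphere T. obs_energy T C s x)"

text \<open>Admissible in time s: M(s) < infinity, i.e. the energies are bounded above.\<close>
definition admissible :: "(real \<Rightarrow> 'a::banach \<Rightarrow>\<^sub>L 'a) \<Rightarrow> ('a \<Rightarrow> 'b::banach) \<Rightarrow> real \<Rightarrow> bool" where
  "admissible T C s \<longleftrightarrow> bdd_above (obs_energy T C s ` dom_sphere T)"

definition exactly_observable :: "(real \<Rightarrow> 'a::banach \<Rightarrow>\<^sub>L 'a) \<Rightarrow> ('a \<Rightarrow> 'b::banach) \<Rightarrow> real \<Rightarrow> bool" where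
  "exactly_observable T C s \<longleftrightarrow> m_obs T C s > 0"

definition BFC_system :: "(real \<Rightarrow> 'a::banach \<Rightarrow>\<^sub>L 'a) \<Rightarrow> ('a \<Rightarrow> 'b::banach) \<Rightarrow> bool" where
  "BFC_system T C \<longleftrightarrow> (\<exists>\<eta> \<tau>. 0 < \<eta> \<and> \<eta> < \<tau> \<and> admissible T C \<tau> \<and>
       exactly_observable T C \<tau> \<and> M_obs T C \<eta> < m_obs T C \<tau>)"

definition sg_eps :: "(real \<Rightarrow> 'a::banach \<Rightarrow>\<^sub>L 'a) \<Rightarrow> real \<Rightarrow> real" where
  "sg_eps T t = (INF x\<in>{x. norm x = 1}. norm (blinfun_apply (T t) x))"

end

theory Submission
  imports Defs
begin

text \<open>Splitting \<open>\<integral>\<^sub>0\<^sup>\<tau> \<parallel>C T(t) x\<parallel>\<^sup>2 dt\<close> at \<open>\<eta>\<close> and using \<open>T(t + \<eta>) = T(t) T(\<eta>)\<close> gives, for \<open>x\<close>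
  in the unit sphere of \<open>D(A)\<close>,
  \<open>m(\<tau>)\<^sup>2 \<le> M(\<eta>)\<^sup>2 + \<parallel>T(\<eta>) x\<parallel>\<^sup>2 M(\<tau>)\<^sup>2\<close>, so the BFC condition \<open>M(\<eta>) < m(\<tau>)\<close> bounds
  \<open>\<parallel>T(\<eta>) x\<parallel>\<close> from below on that sphere. Since \<open>D(A)\<close> is a dense cone, \<open>T(\<eta>)\<close> is
  bounded below on all of \<open>X\<close>, hence so are its powers \<open>T(n\<eta>)\<close>, and
  \<open>T(n\<eta>) = T(n\<eta> - t) T(t)\<close> with \<open>T(n\<eta> - t)\<close> bounded transfers the lower bound to \<open>T(t)\<close>.\<close>

lemma norm_blinfun_le_if_bounded_on_ball:
  fixes F :: "'a::real_normed_vector \<Rightarrow>\<^sub>L 'b::real_normed_vector"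
  assumes r: "r > 0" and bnd: "\<And>y. y \<in> ball x0 r \<Longrightarrow> norm (F y) \<le> k"
  shows "norm F \<le> 4 * k / r"
proof (rule norm_blinfun_bound)
  show "0 \<le> 4 * k / r"
    using order_trans[OF norm_ge_zero bnd[of x0]] r by simp
  fix x
  show "norm (F x) \<le> 4 * k / r * norm x"
  proof (cases "x = 0")
    case False
    define c where "c = r / (2 * norm x)"
    have c: "c > 0" using r False by (simp add: c_def)
    have "x0 + c *\<^sub>R x \<in> ball x0 r" using r False by (simp add: c_def dist_norm)
    then have "norm (F (x0 + c *\<^sub>R x)) \<le> k" "norm (F x0) \<le> k"
      using bnd r by auto
    moreover have "c * norm (F x) = norm (F (x0 + c *\<^sub>R x) - F x0)"
      using c by (simp add: blinfun.add_right blinfun.scaleR_right)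
    ultimately have "c * norm (F x) \<le> 2 * k"
      using norm_triangle_ineq4[of "F (x0 + c *\<^sub>R x)" "F x0"] by linarith
    then show ?thesis using c r False by (simp add: c_def field_simps)
  qed simp
qed

lemma banach_steinhaus_seq:
  fixes F :: "nat \<Rightarrow> 'a::banach \<Rightarrow>\<^sub>L 'b::real_normed_vector"
  assumes pointwise: "\<And>x. \<exists>b. \<forall>n. norm (F n x) \<le> b"
  shows "\<exists>K. \<forall>n. norm (F n) \<le> K"
proof -
  define G where "G k = {x. \<forall>n. norm (F n x) \<le> real k}" for k :: nat
  have closed: "closed (G k)" for k
  proof -
    have "G k = (\<Inter>n. {x. norm (F n x) \<le> real k})" unfolding G_def by auto
    moreover have "closed {x. norm (F n x) \<le> real k}" for n
      by (intro closed_Collect_le continuous_intros)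
    ultimately show ?thesis by auto
  qed
  have cover: "\<Union>(range G) = UNIV"
  proof safe
    fix x
    obtain b where "\<forall>n. norm (F n x) \<le> b" using pointwise by blast
    moreover obtain k :: nat where "b \<le> real k" using real_arch_simple by blast
    ultimately have "x \<in> G k" unfolding G_def by (auto intro: order_trans)
    then show "x \<in> \<Union>(range G)" by blast
  qed simp
  have "\<exists>k. interior (G k) \<noteq> {}"
  proof (rule ccontr)
    assume "\<not> ?thesis"
    then have "euclidean interior_of \<Union>(range G) = {}"
      by (intro Baire_category_alt) (auto simp: completely_metrizable_space_euclidean closed)
    then show False using cover by simp
  qed
  then obtain k x0 where "x0 \<in> interior (G k)" by blast
  then obtain r where "r > 0" "ball x0 r \<subseteq> G k"
    by (meson open_contains_ball_eq open_interior interior_subset subset_trans)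
  then have "norm (F n) \<le> 4 * real k / r" for n
    by (intro norm_blinfun_le_if_bounded_on_ball) (auto simp: G_def)
  then show ?thesis by blast
qed

lemma integral_split_shift:
  fixes g :: "real \<Rightarrow> 'a::banach"
  assumes g: "g integrable_on {0..a + h}" and "0 \<le> a" "0 \<le> h"
  shows "integral {0..a + h} g = integral {0..a} g + integral {0..h} (\<lambda>s. g (a + s))"
proof -
  have "(g has_integral integral {a..a + h} g) {0 + a..h + a}"
    using integrable_on_subinterval[OF g] assms by (simp add: add.commute integrable_integral)
  then have "integral {0..h} (\<lambda>s. g (a + s)) = integral {a..a + h} g"
    using has_integral_shift_Icc_real[of g a _ 0 h] by (simp add: o_def integral_unique)
  then show ?thesis
    using Henstock_Kurzweil_Integration.integral_combine[of 0 a "a + h" g] g assms by simp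
qed

lemma has_vector_derivative_at_right_quotient:
  fixes F :: "real \<Rightarrow> 'a::real_normed_vector"
  assumes D: "(F has_vector_derivative v) (at a within {0..d})" and a: "0 \<le> a" "a < d"
  shows "((\<lambda>h. (1 / h) *\<^sub>R (F (a + h) - F a)) \<longlongrightarrow> v) (at_right 0)"
proof -
  have "((\<lambda>y. (1 / norm (y - a)) *\<^sub>R (F y - (F a + (y - a) *\<^sub>R v))) \<longlongrightarrow> 0) (at a within {0..d})"
    using D unfolding has_vector_derivative_def has_derivative_within by blast
  moreover have "filterlim (\<lambda>h. a + h) (at a within {0..d}) (at_right 0)"
    unfolding filterlim_at
  proof
    have "\<forall>\<^sub>F h in at_right 0. h < d - a" using a
      by (auto simp: eventually_at_right_field intro!: exI[of _ "d - a"])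
    moreover have "\<forall>\<^sub>F h in at_right (0::real). h > 0" by (simp add: eventually_at_right_less)
    ultimately show "\<forall>\<^sub>F h in at_right 0. a + h \<in> {0..d} \<and> a + h \<noteq> a"
      by eventually_elim (use a in auto)
    show "((\<lambda>h. a + h) \<longlongrightarrow> a) (at_right 0)"
      by (rule tendsto_eq_intros tendsto_ident_at tendsto_const | simp)+
  qed
  ultimately have "((\<lambda>h. (1 / norm (a + h - a)) *\<^sub>R (F (a + h) - (F a + (a + h - a) *\<^sub>R v)))
      \<longlongrightarrow> 0) (at_right 0)"
    by (rule filterlim_compose)
  then have "((\<lambda>h. (1 / h) *\<^sub>R (F (a + h) - F a) - v) \<longlongrightarrow> 0) (at_right 0)"
  proof (rule Lim_transform_eventually)
    have "\<forall>\<^sub>F h in at_right (0::real). h > 0" by (simp add: eventually_at_right_less)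
    then show "\<forall>\<^sub>F h in at_right 0. (1 / norm (a + h - a)) *\<^sub>R (F (a + h) - (F a + (a + h - a) *\<^sub>R v))
        = (1 / h) *\<^sub>R (F (a + h) - F a) - v"
      by eventually_elim (simp add: algebra_simps)
  qed
  then show ?thesis using Lim_null by blast
qed

lemma c0_semigroup_zero: "c0_semigroup T \<Longrightarrow> T 0 = id_blinfun"
  unfolding c0_semigroup_def by blast

lemma c0_semigroup_add:
  "c0_semigroup T \<Longrightarrow> 0 \<le> s \<Longrightarrow> 0 \<le> t \<Longrightarrow> T (s + t) x = T s (T t x)"
  unfolding c0_semigroup_def by simp

lemma c0_semigroup_tendsto: "c0_semigroup T \<Longrightarrow> ((\<lambda>t. T t x) \<longlongrightarrow> x) (at_right 0)"
  unfolding c0_semigroup_def by blast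

lemma c0_semigroup_commute:
  assumes "c0_semigroup T" "0 \<le> s" "0 \<le> t"
  shows "T s (T t x) = T t (T s x)"
  using c0_semigroup_add[OF assms] c0_semigroup_add[OF assms(1,3,2)] by (simp add: add.commute)

lemma c0_semigroup_locally_bounded:
  fixes T :: "real \<Rightarrow> 'a::banach \<Rightarrow>\<^sub>L 'a"
  assumes sg: "c0_semigroup T"
  shows "\<exists>\<delta>>0. \<exists>K. \<forall>s\<in>{0..\<delta>}. norm (T s) \<le> K"
proof (rule ccontr)
  assume unbounded: "\<not> ?thesis"
  have "\<exists>s. 0 \<le> s \<and> s \<le> 1 / (real n + 1) \<and> norm (T s) > real n + 1" for n :: nat
  proof -
    have "(0::real) < 1 / (real n + 1)" by simp
    then have "\<not> (\<forall>s\<in>{0..1 / (real n + 1)}. norm (T s) \<le> real n + 1)"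
      using unbounded by blast
    then show ?thesis by (auto simp: not_le)
  qed
  then obtain s where s: "\<And>n. 0 \<le> s n" "\<And>n. s n \<le> 1 / (real n + 1)"
    "\<And>n. norm (T (s n)) > real n + 1"
    by metis
  have s_nonzero: "s n \<noteq> 0" for n
  proof
    assume "s n = 0"
    then have "norm (T (s n)) \<le> 1" using c0_semigroup_zero[OF sg] norm_blinfun_id_le by simp
    then show False using s(3)[of n] by simp
  qed
  have s_pos: "s n > 0" for n
    using s(1)[of n] s_nonzero[of n] by linarith
  have "s \<longlonglongrightarrow> 0"
  proof (rule tendsto_sandwich[of "\<lambda>_. 0" _ _ "\<lambda>n. 1 / (real n + 1)"])
    show "(\<lambda>n. 1 / (real n + 1)) \<longlonglongrightarrow> 0"
      using LIMSEQ_inverse_real_of_nat_add[of 0] by (simp add: inverse_eq_divide add.commute)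
  qed (use s in auto)
  then have "filterlim s (at_right 0) sequentially"
    using s_pos by (intro tendsto_imp_filterlim_at_right) auto
  then have "(\<lambda>n. T (s n) x) \<longlonglongrightarrow> x" for x
    by (rule filterlim_compose[OF c0_semigroup_tendsto[OF sg]])
  then have "\<exists>b. \<forall>n. norm (T (s n) x) \<le> b" for x
    by (meson Bseq_def convergentI convergent_imp_Bseq)
  then obtain K where K: "\<And>n. norm (T (s n)) \<le> K"
    using banach_steinhaus_seq[of "\<lambda>n. T (s n)"] by blast
  obtain n :: nat where "K \<le> real n" using real_arch_simple by blast
  then show False using K[of n] s(3)[of n] by simp
qed

lemma c0_semigroup_continuous_on:
  assumes sg: "c0_semigroup T" and K: "\<forall>s\<in>{0..\<delta>}. norm (T s) \<le> K"
  shows "continuous_on {0..\<delta>} (\<lambda>t. T t x)"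
  unfolding continuous_on_iff
proof (intro ballI allI impI)
  fix t e :: real
  assume t: "t \<in> {0..\<delta>}" and e: "e > 0"
  have K0: "K \<ge> 0" using K t by (auto intro: order_trans[OF norm_ge_zero])
  have "\<forall>\<^sub>F h in at_right 0. dist (T h x) x < e / (K + 1)"
    using c0_semigroup_tendsto[OF sg, of x] e K0 unfolding tendsto_iff by simp
  then obtain b where b: "b > 0" "\<And>h. 0 < h \<Longrightarrow> h < b \<Longrightarrow> dist (T h x) x < e / (K + 1)"
    unfolding eventually_at_right_field by auto
  have close: "dist (T v x) (T u x) < e"
    if "0 \<le> u" "u < v" "v \<le> \<delta>" "v - u < b" for u v
  proof -
    have "T v x - T u x = T u (T (v - u) x - x)"
      using c0_semigroup_add[OF sg, of u "v - u" x] that by (simp add: blinfun.diff_right)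
    moreover have "norm (T u) \<le> K" using K that by auto
    ultimately have "dist (T v x) (T u x) \<le> K * norm (T (v - u) x - x)"
      unfolding dist_norm by (metis order_trans[OF norm_blinfun mult_right_mono] norm_ge_zero)
    also have "\<dots> \<le> K * (e / (K + 1))"
      using b(2)[of "v - u"] that K0 by (intro mult_left_mono) (auto simp: dist_norm)
    also have "\<dots> < e" using K0 e by (simp add: field_simps)
    finally show ?thesis .
  qed
  show "\<exists>d>0. \<forall>u\<in>{0..\<delta>}. dist u t < d \<longrightarrow> dist (T u x) (T t x) < e"
  proof (intro exI[of _ b] conjI ballI impI b(1))
    fix u assume u: "u \<in> {0..\<delta>}" "dist u t < b"
    consider "u < t" | "u = t" | "t < u" by linarith
    then show "dist (T u x) (T t x) < e"
      by cases (use close[of u t] close[of t u] u t e in \<open>auto simp: dist_commute dist_real_def\<close>)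
  qed
qed

lemma sg_dom_scaleR: "x \<in> sg_dom T \<Longrightarrow> c *\<^sub>R x \<in> sg_dom T"
proof -
  assume "x \<in> sg_dom T"
  then obtain y where "((\<lambda>h. (1 / h) *\<^sub>R (T h x - x)) \<longlongrightarrow> y) (at_right 0)"
    unfolding sg_dom_def by blast
  then have "((\<lambda>h. c *\<^sub>R ((1 / h) *\<^sub>R (T h x - x))) \<longlongrightarrow> c *\<^sub>R y) (at_right 0)"
    by (intro tendsto_scaleR tendsto_const)
  then have "((\<lambda>h. (1 / h) *\<^sub>R (T h (c *\<^sub>R x) - c *\<^sub>R x)) \<longlongrightarrow> c *\<^sub>R y) (at_right 0)"
    by (simp add: blinfun.scaleR_right algebra_simps)
  then show ?thesis unfolding sg_dom_def by blast
qed

lemma sg_dom_invariant: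
  assumes sg: "c0_semigroup T" and x: "x \<in> sg_dom T" and t: "0 \<le> t"
  shows "T t x \<in> sg_dom T"
proof -
  obtain y where "((\<lambda>h. (1 / h) *\<^sub>R (T h x - x)) \<longlongrightarrow> y) (at_right 0)"
    using x unfolding sg_dom_def by blast
  then have "((\<lambda>h. T t ((1 / h) *\<^sub>R (T h x - x))) \<longlongrightarrow> T t y) (at_right 0)"
    by (rule bounded_linear.tendsto[OF blinfun.bounded_linear_right])
  then have "((\<lambda>h. (1 / h) *\<^sub>R (T h (T t x) - T t x)) \<longlongrightarrow> T t y) (at_right 0)"
  proof (rule Lim_transform_eventually)
    show "\<forall>\<^sub>F h in at_right 0. T t ((1 / h) *\<^sub>R (T h x - x)) = (1 / h) *\<^sub>R (T h (T t x) - T t x)"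
      using eventually_at_right_less[of 0]
      by eventually_elim
         (use c0_semigroup_commute[OF sg _ t] in \<open>simp add: blinfun.scaleR_right blinfun.diff_right\<close>)
  qed
  then show ?thesis unfolding sg_dom_def by blast
qed

lemma c0_semigroup_shift_orbit_integral:
  assumes sg: "c0_semigroup T" and cont: "continuous_on {0..d} (\<lambda>s. T s x)"
    and "0 \<le> h" "0 \<le> k" "k + h \<le> d"
  shows "T k (integral {0..h} (\<lambda>s. T s x))
    = integral {0..k + h} (\<lambda>s. T s x) - integral {0..k} (\<lambda>s. T s x)"
proof -
  have int: "(\<lambda>s. T s x) integrable_on {0..a}" if "a \<le> d" for a
    using that by (intro integrable_continuous_interval continuous_on_subset[OF cont]) auto
  have "T k (integral {0..h} (\<lambda>s. T s x)) = integral {0..h} (\<lambda>s. T k (T s x))"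
    using int assms by (intro integral_blinfun_apply[symmetric]) auto
  also have "\<dots> = integral {0..h} (\<lambda>s. T (k + s) x)"
    using assms by (intro integral_cong) (simp add: c0_semigroup_add)
  also have "\<dots> = integral {0..k + h} (\<lambda>s. T s x) - integral {0..k} (\<lambda>s. T s x)"
    using integral_split_shift[OF int, of k h] assms by simp
  finally show ?thesis .
qed

text \<open>The mean \<open>h\<^sup>-\<^sup>1 \<integral>\<^sub>0\<^sup>h T(s) x ds\<close> lies in the domain: by the previous lemma its difference
  quotient is \<open>h\<^sup>-\<^sup>1\<close> times the difference of two difference quotients of the orbit integral.\<close>

lemma c0_semigroup_orbit_mean_in_dom:
  assumes sg: "c0_semigroup T" and cont: "continuous_on {0..d} (\<lambda>s. T s x)"
    and h: "0 < h" "h < d"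
  shows "(1 / h) *\<^sub>R integral {0..h} (\<lambda>s. T s x) \<in> sg_dom T"
proof -
  define F where "F a = integral {0..a} (\<lambda>s. T s x)" for a
  have quot: "((\<lambda>k. (1 / k) *\<^sub>R (F (a + k) - F a)) \<longlongrightarrow> T a x) (at_right 0)"
    if "0 \<le> a" "a < d" for a
    using that unfolding F_def
    by (intro has_vector_derivative_at_right_quotient[of _ _ _ d] integral_has_vector_derivative cont)
      auto
  have "((\<lambda>k. (1 / h) *\<^sub>R ((1 / k) *\<^sub>R (F (h + k) - F h) - (1 / k) *\<^sub>R (F (0 + k) - F 0)))
       \<longlongrightarrow> (1 / h) *\<^sub>R (T h x - T 0 x)) (at_right 0)"
    using h by (intro tendsto_scaleR tendsto_const tendsto_diff quot) auto
  then have "((\<lambda>k. (1 / k) *\<^sub>R (T k ((1 / h) *\<^sub>R F h) - (1 / h) *\<^sub>R F h))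
       \<longlongrightarrow> (1 / h) *\<^sub>R (T h x - T 0 x)) (at_right 0)"
  proof (rule Lim_transform_eventually)
    have "\<forall>\<^sub>F k in at_right 0. k < d - h"
      using h by (auto simp: eventually_at_right_field intro!: exI[of _ "d - h"])
    then show "\<forall>\<^sub>F k in at_right 0.
        (1 / h) *\<^sub>R ((1 / k) *\<^sub>R (F (h + k) - F h) - (1 / k) *\<^sub>R (F (0 + k) - F 0))
        = (1 / k) *\<^sub>R (T k ((1 / h) *\<^sub>R F h) - (1 / h) *\<^sub>R F h)"
      using eventually_at_right_less[of 0]
      by eventually_elim
        (use h c0_semigroup_shift_orbit_integral[OF sg cont, of h] in
          \<open>simp add: F_def blinfun.scaleR_right algebra_simps flip: scaleR_right_distrib\<close>)
  qed
  then show ?thesis unfolding sg_dom_def F_def by blast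
qed

lemma sg_dom_dense:
  fixes T :: "real \<Rightarrow> 'a::banach \<Rightarrow>\<^sub>L 'a"
  assumes sg: "c0_semigroup T"
  shows "closure (sg_dom T) = UNIV"
proof (rule sym, rule UNIV_eq_I)
  fix x :: 'a
  obtain \<delta> K where \<delta>: "\<delta> > 0" and K: "\<forall>s\<in>{0..\<delta>}. norm (T s) \<le> K"
    using c0_semigroup_locally_bounded[OF sg] by blast
  note cont = c0_semigroup_continuous_on[OF sg K, of x]
  have "((\<lambda>h. (1 / h) *\<^sub>R (integral {0..0 + h} (\<lambda>s. T s x) - integral {0..0} (\<lambda>s. T s x)))
      \<longlongrightarrow> T 0 x) (at_right 0)"
    by (rule has_vector_derivative_at_right_quotient[OF integral_has_vector_derivative[OF cont]])
      (use \<delta> in auto)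
  then have "((\<lambda>h. (1 / h) *\<^sub>R integral {0..h} (\<lambda>s. T s x)) \<longlongrightarrow> x) (at_right 0)"
    using c0_semigroup_zero[OF sg] by simp
  moreover have "\<forall>\<^sub>F h in at_right 0. (1 / h) *\<^sub>R integral {0..h} (\<lambda>s. T s x) \<in> closure (sg_dom T)"
  proof -
    have "\<forall>\<^sub>F h in at_right 0. h < \<delta>"
      using \<delta> by (auto simp: eventually_at_right_field intro!: exI[of _ \<delta>])
    then show ?thesis
      using eventually_at_right_less[of 0]
      by eventually_elim
        (use c0_semigroup_orbit_mean_in_dom[OF sg cont] closure_subset in blast)
  qed
  ultimately show "x \<in> closure (sg_dom T)"
    by (intro Lim_in_closed_set[OF closed_closure]) auto
qed

lemma blinfun_bounded_below_if_dense_cone: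
  fixes L :: "'a::real_normed_vector \<Rightarrow>\<^sub>L 'b::real_normed_vector"
  assumes dense: "closure D = UNIV" and cone: "\<And>x c. x \<in> D \<Longrightarrow> c *\<^sub>R x \<in> D"
    and bnd: "\<And>u. u \<in> D \<Longrightarrow> norm u = 1 \<Longrightarrow> c \<le> norm (L u)"
  shows "c * norm x \<le> norm (L x)"
proof -
  have "c * norm y \<le> norm (L y)" if "y \<in> D" for y
  proof (cases "y = 0")
    case False
    have "c \<le> norm (L ((1 / norm y) *\<^sub>R y))"
      using bnd cone that False by simp
    then show ?thesis using False by (simp add: blinfun.scaleR_right field_simps)
  qed simp
  then have "closure D \<subseteq> {y. c * norm y \<le> norm (L y)}"
    by (intro closure_minimal closed_Collect_le continuous_intros) auto
  then show ?thesis using dense by auto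
qed

lemma c0_semigroup_iterate_bounded_below:
  assumes sg: "c0_semigroup T" and "0 \<le> \<eta>" "0 \<le> c"
    and bnd: "\<And>x. c * norm x \<le> norm (T \<eta> x)"
  shows "c ^ n * norm x \<le> norm (T (real n * \<eta>) x)"
proof (induction n arbitrary: x)
  case 0
  then show ?case using c0_semigroup_zero[OF sg] by simp
next
  case (Suc n)
  have "c ^ Suc n * norm x \<le> c * norm (T (real n * \<eta>) x)"
    using Suc.IH assms by (simp add: mult.assoc mult_left_mono)
  also have "\<dots> \<le> norm (T \<eta> (T (real n * \<eta>) x))" by (rule bnd)
  also have "\<dots> = norm (T (real (Suc n) * \<eta>) x)"
    using c0_semigroup_add[OF sg, of \<eta> "real n * \<eta>"] assms by (simp add: algebra_simps)
  finally show ?case .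
qed

lemma c0_semigroup_bounded_below:
  assumes sg: "c0_semigroup T" and "0 < \<eta>" "0 < c" "0 \<le> t"
    and bnd: "\<And>x. c * norm x \<le> norm (T \<eta> x)"
  shows "\<exists>b>0. \<forall>x. b * norm x \<le> norm (T t x)"
proof -
  obtain n :: nat where "t / \<eta> \<le> real n" using real_arch_simple by blast
  then have tn: "t \<le> real n * \<eta>" using assms by (simp add: field_simps)
  define N where "N = norm (T (real n * \<eta> - t))"
  have "c ^ n * norm x \<le> (N + 1) * norm (T t x)" for x
  proof -
    have "c ^ n * norm x \<le> norm (T (real n * \<eta> - t) (T t x))"
      using c0_semigroup_iterate_bounded_below[OF sg _ _ bnd, of n x]
        c0_semigroup_add[OF sg, of "real n * \<eta> - t" t x] assms tn
      by simp
    also have "\<dots> \<le> (N + 1) * norm (T t x)"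
      unfolding N_def by (rule order_trans[OF norm_blinfun]) (simp add: mult_right_mono)
    finally show ?thesis .
  qed
  moreover have "N \<ge> 0" unfolding N_def by simp
  ultimately show ?thesis
    using assms by (intro exI[of _ "c ^ n / (N + 1)"]) (simp add: field_simps)
qed

lemma sg_eps_ge:
  fixes T :: "real \<Rightarrow> 'a::banach \<Rightarrow>\<^sub>L 'a"
  assumes "\<exists>z::'a. norm z = 1" and bnd: "\<And>x. b * norm x \<le> norm (T t x)"
  shows "b \<le> sg_eps T t"
  unfolding sg_eps_def using assms by (intro cInf_greatest) (auto, metis mult.right_neutral)

lemma obs_energy_nonneg: "0 \<le> obs_energy T C s x"
  unfolding obs_energy_def
  by (cases "(\<lambda>t. (norm (C (T t x)))\<^sup>2) integrable_on {0..s}")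
    (auto intro: integral_nonneg simp: not_integrable_integral)

lemma obs_energy_scaleR:
  assumes sg: "c0_semigroup T" and C_scale: "\<forall>x\<in>sg_dom T. \<forall>c::real. C (c *\<^sub>R x) = c *\<^sub>R C x"
    and x: "x \<in> sg_dom T"
  shows "obs_energy T C s (c *\<^sub>R x) = c\<^sup>2 * obs_energy T C s x"
proof -
  have "(norm (C (T t (c *\<^sub>R x))))\<^sup>2 = c\<^sup>2 * (norm (C (T t x)))\<^sup>2" if "t \<in> {0..s}" for t
    using sg_dom_invariant[OF sg x, of t] C_scale that
    by (simp add: blinfun.scaleR_right power_mult_distrib)
  then have "integral {0..s} (\<lambda>t. (norm (C (T t (c *\<^sub>R x))))\<^sup>2)
      = integral {0..s} (\<lambda>t. c\<^sup>2 * (norm (C (T t x)))\<^sup>2)"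
    by (rule integral_cong)
  then show ?thesis unfolding obs_energy_def by simp
qed

lemma obs_energy_mono:
  fixes T :: "real \<Rightarrow> 'a::banach \<Rightarrow>\<^sub>L 'a"
  assumes "(\<lambda>t. (norm (C (T t x)))\<^sup>2) integrable_on {0..s'}" "0 \<le> s" "s \<le> s'"
  shows "obs_energy T C s x \<le> obs_energy T C s' x"
  unfolding obs_energy_def using assms
  by (intro integral_subset_le) (auto intro: integrable_on_subinterval)

lemma obs_energy_split:
  assumes sg: "c0_semigroup T" and int: "(\<lambda>t. (norm (C (T t x)))\<^sup>2) integrable_on {0..\<tau>}"
    and "0 \<le> \<eta>" "\<eta> \<le> \<tau>"
  shows "obs_energy T C \<tau> x = obs_energy T C \<eta> x + obs_energy T C (\<tau> - \<eta>) (T \<eta> x)"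
proof -
  have "integral {0..\<tau> - \<eta>} (\<lambda>s. (norm (C (T (\<eta> + s) x)))\<^sup>2)
      = integral {0..\<tau> - \<eta>} (\<lambda>s. (norm (C (T s (T \<eta> x))))\<^sup>2)"
    using assms by (intro integral_cong) (simp add: add.commute c0_semigroup_add)
  then show ?thesis
    using integral_split_shift[of "\<lambda>t. (norm (C (T t x)))\<^sup>2" \<eta> "\<tau> - \<eta>"] int assms
    by (simp add: obs_energy_def)
qed

lemma m_obs_sq_le_obs_energy:
  assumes "x \<in> dom_sphere T"
  shows "(m_obs T C s)\<^sup>2 \<le> obs_energy T C s x"
proof -
  have bdd: "bdd_below (obs_energy T C s ` dom_sphere T)"
    using obs_energy_nonneg by (intro bdd_belowI) blast
  have "0 \<le> (INF u\<in>dom_sphere T. obs_energy T C s u)"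
    using assms obs_energy_nonneg by (intro cINF_greatest) auto
  moreover have "(INF u\<in>dom_sphere T. obs_energy T C s u) \<le> obs_energy T C s x"
    using bdd assms by (rule cINF_lower)
  ultimately show ?thesis unfolding m_obs_def by simp
qed

lemma obs_energy_le_M_obs_sq:
  assumes "bdd_above (obs_energy T C s ` dom_sphere T)" "x \<in> dom_sphere T"
  shows "obs_energy T C s x \<le> (M_obs T C s)\<^sup>2"
proof -
  have "obs_energy T C s x \<le> (SUP u\<in>dom_sphere T. obs_energy T C s u)"
    using assms by (intro cSUP_upper) auto
  moreover have "0 \<le> obs_energy T C s x" by (rule obs_energy_nonneg)
  ultimately show ?thesis unfolding M_obs_def by simp
qed

lemma M_obs_nonneg:
  assumes "admissible T C s" "x \<in> dom_sphere T"
  shows "0 \<le> M_obs T C s"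
  using order_trans[OF obs_energy_nonneg cSUP_upper[OF assms(2) assms(1)[unfolded admissible_def]]]
  by (simp add: M_obs_def)

text \<open>For a non-integrable function \<open>obs_energy\<close> is the junk value \<open>0\<close>; exact observability
  excludes this on the unit sphere, which is what makes the energies monotone and additive in time.\<close>

lemma exactly_observable_integrable:
  assumes "exactly_observable T C \<tau>" "x \<in> dom_sphere T"
  shows "(\<lambda>t. (norm (C (T t x)))\<^sup>2) integrable_on {0..\<tau>}"
proof -
  have "0 < (m_obs T C \<tau>)\<^sup>2" using assms(1) unfolding exactly_observable_def by simp
  also have "\<dots> \<le> obs_energy T C \<tau> x" using assms(2) by (rule m_obs_sq_le_obs_energy)
  finally show ?thesis unfolding obs_energy_def using not_integrable_integral by fastforce
qed

lemma obs_energy_le_M_obs_sq_before: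
  assumes "admissible T C \<tau>" "exactly_observable T C \<tau>" "x \<in> dom_sphere T" "0 \<le> s" "s \<le> \<tau>"
  shows "obs_energy T C s x \<le> (M_obs T C \<tau>)\<^sup>2"
proof -
  have "obs_energy T C s x \<le> obs_energy T C \<tau> x"
    using exactly_observable_integrable[OF assms(2,3)] assms(4,5) by (rule obs_energy_mono)
  also have "\<dots> \<le> (M_obs T C \<tau>)\<^sup>2"
    using assms(1,3) unfolding admissible_def by (rule obs_energy_le_M_obs_sq)
  finally show ?thesis .
qed

lemma admissible_before:
  assumes "admissible T C \<tau>" "exactly_observable T C \<tau>" "0 \<le> s" "s \<le> \<tau>"
  shows "admissible T C s"
  unfolding admissible_def using obs_energy_le_M_obs_sq_before[OF assms(1,2) _ assms(3,4)]
  by (intro bdd_aboveI) blast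

lemma obs_energy_le_norm_sq:
  assumes sg: "c0_semigroup T" and C_scale: "\<forall>x\<in>sg_dom T. \<forall>c::real. C (c *\<^sub>R x) = c *\<^sub>R C x"
    and y: "y \<in> sg_dom T" and bnd: "\<And>u. u \<in> dom_sphere T \<Longrightarrow> obs_energy T C s u \<le> B"
  shows "obs_energy T C s y \<le> (norm y)\<^sup>2 * B"
proof (cases "y = 0")
  case True
  then show ?thesis
    using obs_energy_scaleR[OF sg C_scale y, of s 0] by simp
next
  case False
  define u where "u = (1 / norm y) *\<^sub>R y"
  have u: "u \<in> dom_sphere T" using y False sg_dom_scaleR by (simp add: u_def dom_sphere_def)
  have "obs_energy T C s y = (norm y)\<^sup>2 * obs_energy T C s u"
    using obs_energy_scaleR[OF sg C_scale, of u s "norm y"] u False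
    by (simp add: u_def dom_sphere_def)
  also have "\<dots> \<le> (norm y)\<^sup>2 * B" using bnd[OF u] by (simp add: mult_left_mono)
  finally show ?thesis .
qed

lemma BFC_energy_inequality:
  assumes sg: "c0_semigroup T" and C_scale: "\<forall>x\<in>sg_dom T. \<forall>c::real. C (c *\<^sub>R x) = c *\<^sub>R C x"
    and "0 < \<eta>" "\<eta> < \<tau>" and adm: "admissible T C \<tau>" and obs: "exactly_observable T C \<tau>"
    and x: "x \<in> dom_sphere T"
  shows "(m_obs T C \<tau>)\<^sup>2 \<le> (M_obs T C \<eta>)\<^sup>2 + (norm (T \<eta> x))\<^sup>2 * (M_obs T C \<tau>)\<^sup>2"
proof -
  have Tx: "T \<eta> x \<in> sg_dom T"
    using sg_dom_invariant[OF sg] x assms by (simp add: dom_sphere_def)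
  have adm\<eta>: "admissible T C \<eta>" using admissible_before[OF adm obs] assms by simp
  have "(m_obs T C \<tau>)\<^sup>2 \<le> obs_energy T C \<tau> x" using x by (rule m_obs_sq_le_obs_energy)
  also have "\<dots> = obs_energy T C \<eta> x + obs_energy T C (\<tau> - \<eta>) (T \<eta> x)"
    using obs_energy_split[OF sg exactly_observable_integrable[OF obs x]] assms by simp
  also have "\<dots> \<le> (M_obs T C \<eta>)\<^sup>2 + (norm (T \<eta> x))\<^sup>2 * (M_obs T C \<tau>)\<^sup>2"
    using obs_energy_le_M_obs_sq[OF adm\<eta>[unfolded admissible_def] x]
      obs_energy_le_norm_sq[OF sg C_scale Tx obs_energy_le_M_obs_sq_before[OF adm obs]] assms
    by (intro add_mono) auto
  finally show ?thesis .
qed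

lemma BFC_system_bounded_below:
  fixes T :: "real \<Rightarrow> 'a::banach \<Rightarrow>\<^sub>L 'a"
  assumes sg: "c0_semigroup T" and C_scale: "\<forall>x\<in>sg_dom T. \<forall>c::real. C (c *\<^sub>R x) = c *\<^sub>R C x"
    and bfc: "BFC_system T C"
  shows "\<exists>\<eta>>0. \<exists>c>0. \<forall>x. c * norm x \<le> norm (T \<eta> x)"
proof -
  obtain \<eta> \<tau> where \<eta>\<tau>: "0 < \<eta>" "\<eta> < \<tau>" and adm: "admissible T C \<tau>"
    and obs: "exactly_observable T C \<tau>" and gap: "M_obs T C \<eta> < m_obs T C \<tau>"
    using bfc unfolding BFC_system_def by blast
  have "\<exists>c>0. \<forall>x\<in>dom_sphere T. c \<le> norm (T \<eta> x)"
  proof (cases "dom_sphere T = {}")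
    case False
    then obtain x0 where x0: "x0 \<in> dom_sphere T" by blast
    have m_pos: "0 < m_obs T C \<tau>" using obs unfolding exactly_observable_def .
    have "0 < (m_obs T C \<tau>)\<^sup>2" using m_pos by simp
    also have "\<dots> \<le> (SUP u\<in>dom_sphere T. obs_energy T C \<tau> u)"
      using m_obs_sq_le_obs_energy[OF x0] cSUP_upper[OF x0 adm[unfolded admissible_def]]
      by (rule order_trans)
    finally have M_pos: "0 < M_obs T C \<tau>" by (simp add: M_obs_def)
    have gap_sq: "0 < (m_obs T C \<tau>)\<^sup>2 - (M_obs T C \<eta>)\<^sup>2"
      using gap M_obs_nonneg[OF admissible_before[OF adm obs, of \<eta>] x0] \<eta>\<tau>
      by (simp add: power_strict_mono)
    define c where "c = sqrt ((m_obs T C \<tau>)\<^sup>2 - (M_obs T C \<eta>)\<^sup>2) / M_obs T C \<tau>"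
    have "c \<le> norm (T \<eta> x)" if "x \<in> dom_sphere T" for x
    proof -
      have "c\<^sup>2 \<le> (norm (T \<eta> x))\<^sup>2"
        using BFC_energy_inequality[OF sg C_scale \<eta>\<tau> adm obs that] gap_sq M_pos
        by (simp add: c_def power_divide pos_divide_le_eq)
      then show ?thesis by (rule power2_le_imp_le) simp
    qed
    moreover have "0 < c" using gap_sq M_pos by (simp add: c_def)
    ultimately show ?thesis by blast
  qed (use zero_less_one in blast)
  then obtain c where "0 < c" and "\<forall>x\<in>dom_sphere T. c \<le> norm (T \<eta> x)" by blast
  then have "\<forall>x. c * norm x \<le> norm (T \<eta> x)"
    by (intro allI blinfun_bounded_below_if_dense_cone[OF sg_dom_dense[OF sg] sg_dom_scaleR])
      (auto simp: dom_sphere_def)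
  then show ?thesis using \<open>0 < c\<close> \<eta>\<tau> by blast
qed

theorem lemma3p1:
  fixes T :: "real \<Rightarrow> 'x::banach \<Rightarrow>\<^sub>L 'x"
    and A :: "'x \<Rightarrow> 'x"
    and C :: "'x \<Rightarrow> 'y::banach"
  assumes sg: "c0_semigroup T"
    and gen: "\<forall>x\<in>sg_dom T. A x = - sg_gen T x"
    and C_add: "\<forall>x\<in>sg_dom T. \<forall>z\<in>sg_dom T. C (x + z) = C x + C z"
    and C_scale: "\<forall>x\<in>sg_dom T. \<forall>c::real. C (c *\<^sub>R x) = c *\<^sub>R C x"
    and C_bdd: "\<exists>K. \<forall>x\<in>sg_dom T. norm (C x) \<le> K * (norm x + norm (A x))"
    and bfc: "BFC_system T C"
  shows "\<forall>t>0. sg_eps T t > 0"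
proof (intro allI impI)
  fix t :: real
  assume "t > 0"
  show "sg_eps T t > 0"
  proof (cases "\<exists>z::'x. norm z = 1")
    case True
    obtain \<eta> c where "0 < \<eta>" "0 < c" and bnd: "\<And>x. c * norm x \<le> norm (T \<eta> x)"
      using BFC_system_bounded_below[OF sg C_scale bfc] by blast
    then obtain b where "0 < b" and "\<And>x. b * norm x \<le> norm (T t x)"
      using c0_semigroup_bounded_below[OF sg _ _ less_imp_le[OF \<open>t > 0\<close>] bnd] by blast
    then have "b \<le> sg_eps T t" by (intro sg_eps_ge[OF True])
    then show ?thesis using \<open>0 < b\<close> by linarith
  next
    text \<open>In the zero space both \<open>sg_eps T t\<close> and \<open>m_obs T C \<tau>\<^sup>2\<close> are the junk value
      \<open>Inf {}\<close>, so exact observability is what makes \<open>sg_eps T t\<close> positive.\<close>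
    case False
    then have "{x::'x. norm x = 1} = {}" by blast
    then have "sg_eps T t = Inf {}" and "dom_sphere T = {}"
      by (simp_all add: sg_eps_def dom_sphere_def)
    moreover obtain \<tau> where "exactly_observable T C \<tau>"
      using bfc unfolding BFC_system_def by blast
    ultimately show ?thesis
      unfolding exactly_observable_def m_obs_def by simp
  qed
qed

end
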